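(* Let $G=(V,E)$ be a finite, simple, connected graph with Bakry Emery curvature $K(x)\geq K>0$ at every vertex $x$. Then \[ \operatorname{diam}_{\operatorname{eff}}(G)\leq\frac{\max_v\operatorname{Deg}(v)}{K}. \]
   Context: $d$ is the combinatorial distance, $\operatorname{Deg}$ the degree, $\operatorname{diam}_{\operatorname{eff}}(G)=\frac{1}{|V|^2}\sum_{x,y}d(x,y)$. Laplacian $\Delta f(x)=\sum_{y\sim x}(f(y)-f(x))$. Define $\Gamma_0(f,g)=fg$ and $2\Gamma_{i+1}(f,g)=\Delta\Gamma_i(f,g)-\Gamma_i(f,\Delta g)-\Gamma_i(\Delta f,g)$; write $\Gamma=\Gamma_1$, $\Gamma_i f=\Gamma_i(f,f)$. The Bakry Emery curvature at $x$ is $K(x)=\inf\{\Gamma_2 f(x): f:V\to\mathbb{R},\ \Gamma f(x)=1\}$. *)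

theory Defs
  imports "HOL-Analysis.Analysis" "HOL-Library.Extended_Real"
begin

definition simple_graph :: "'a set \<Rightarrow> ('a \<Rightarrow> 'a \<Rightarrow> bool) \<Rightarrow> bool" where
  "simple_graph V E \<longleftrightarrow> finite V \<and> (\<forall>x y. E x y \<longrightarrow> x \<in> V \<and> y \<in> V)
     \<and> (\<forall>x y. E x y \<longrightarrow> E y x) \<and> (\<forall>x. \<not> E x x)"

definition nbrs :: "'a set \<Rightarrow> ('a \<Rightarrow> 'a \<Rightarrow> bool) \<Rightarrow> 'a \<Rightarrow> 'a set" where
  "nbrs V E x = {y \<in> V. E x y}"

definition deg :: "'a set \<Rightarrow> ('a \<Rightarrow> 'a \<Rightarrow> bool) \<Rightarrow> 'a \<Rightarrow> nat" where
  "deg V E x = card (nbrs V E x)"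

(* walk x0 x1 ... xn given as a list of vertices; its length is the number of edges *)
definition is_walk :: "('a \<Rightarrow> 'a \<Rightarrow> bool) \<Rightarrow> 'a list \<Rightarrow> 'a \<Rightarrow> 'a \<Rightarrow> bool" where
  "is_walk E p x y \<longleftrightarrow> p \<noteq> [] \<and> hd p = x \<and> last p = y
     \<and> (\<forall>i. Suc i < length p \<longrightarrow> E (p ! i) (p ! Suc i))"

definition connected_graph :: "'a set \<Rightarrow> ('a \<Rightarrow> 'a \<Rightarrow> bool) \<Rightarrow> bool" where
  "connected_graph V E \<longleftrightarrow> V \<noteq> {} \<and> (\<forall>x\<in>V. \<forall>y\<in>V. \<exists>p. is_walk E p x y)"

definition gdist :: "('a \<Rightarrow> 'a \<Rightarrow> bool) \<Rightarrow> 'a \<Rightarrow> 'a \<Rightarrow> nat" where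
  "gdist E x y = (LEAST n. \<exists>p. is_walk E p x y \<and> length p = Suc n)"

definition eff_diam :: "'a set \<Rightarrow> ('a \<Rightarrow> 'a \<Rightarrow> bool) \<Rightarrow> real" where
  "eff_diam V E = (\<Sum>x\<in>V. \<Sum>y\<in>V. real (gdist E x y)) / (real (card V))^2"

definition laplacian :: "'a set \<Rightarrow> ('a \<Rightarrow> 'a \<Rightarrow> bool) \<Rightarrow> ('a \<Rightarrow> real) \<Rightarrow> 'a \<Rightarrow> real" where
  "laplacian V E f x = (\<Sum>y\<in>nbrs V E x. f y - f x)"

fun GammaI :: "'a set \<Rightarrow> ('a \<Rightarrow> 'a \<Rightarrow> bool) \<Rightarrow> nat \<Rightarrow> ('a \<Rightarrow> real) \<Rightarrow> ('a \<Rightarrow> real) \<Rightarrow> 'a \<Rightarrow> real" where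
  "GammaI V E 0 f g = (\<lambda>x. f x * g x)"
| "GammaI V E (Suc i) f g = (\<lambda>x. (laplacian V E (GammaI V E i f g) x
      - GammaI V E i f (laplacian V E g) x - GammaI V E i (laplacian V E f) g x) / 2)"

(* Bakry-Emery curvature at x, as an extended real (infimum of the empty set is +infinity,
   an unbounded-below set gives -infinity) *)
definition BE_curv :: "'a set \<Rightarrow> ('a \<Rightarrow> 'a \<Rightarrow> bool) \<Rightarrow> 'a \<Rightarrow> ereal" where
  "BE_curv V E x = Inf {ereal (GammaI V E 2 f f x) | f. GammaI V E 1 f f x = 1}"

end

theory Submission
  imports Defs "Jordan_Normal_Form.Determinant"
begin

(*
  Fix a vertex a, let f = d(a, _) and let m be the mean of f. Since the Laplacian is invertible
  on functions of mean zero, there is u with \<Delta>u = f - m. At a vertex x maximising \<Gamma>u we have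
  \<Delta>\<Gamma>u(x) \<le> 0, and \<Gamma>(u, \<Delta>u) = \<Gamma>(u, f) since \<Delta>u - f is constant, so the curvature bound gives
  K \<Gamma>u(x) \<le> \<Gamma>\<^sub>2u(x) \<le> -\<Gamma>(u, f)(x). As f is 1-Lipschitz, Cauchy-Schwarz turns this into
  K\<^sup>2 \<Gamma>u \<le> Deg/2 everywhere. Finally f(a) = 0, so m = -\<Delta>u(a) and, again by Cauchy-Schwarz,
  m\<^sup>2 \<le> 2 Deg \<Gamma>u(a) \<le> (Deg/K)\<^sup>2. Averaging m \<le> Deg/K over a bounds the effective diameter.
*)

lemma simple_graph_finite: "simple_graph V E \<Longrightarrow> finite V"
  by (simp add: simple_graph_def)

lemma simple_graph_edge_in: "simple_graph V E \<Longrightarrow> E x y \<Longrightarrow> x \<in> V \<and> y \<in> V"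
  by (simp add: simple_graph_def)

lemma simple_graph_sym: "simple_graph V E \<Longrightarrow> E x y \<Longrightarrow> E y x"
  by (simp add: simple_graph_def)

lemma finite_nbrs: "simple_graph V E \<Longrightarrow> finite (nbrs V E x)"
  by (simp add: nbrs_def simple_graph_finite)

lemma connected_graph_card_pos: "simple_graph V E \<Longrightarrow> connected_graph V E \<Longrightarrow> card V > 0"
  by (simp add: card_gt_0_iff connected_graph_def simple_graph_finite)

lemma laplacian_eq: "laplacian V E u x = (\<Sum>y\<in>nbrs V E x. u y) - real (deg V E x) * u x"
  by (simp add: laplacian_def sum_subtractf deg_def)

lemma laplacian_cmult: "laplacian V E (\<lambda>x. c * u x) x = c * laplacian V E u x"
  by (simp add: laplacian_def sum_distrib_left algebra_simps)

lemma GammaI_1_eq: "GammaI V E 1 f g x = (\<Sum>y\<in>nbrs V E x. (f y - f x) * (g y - g x)) / 2"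
  by (simp add: laplacian_def sum_subtractf[symmetric] algebra_simps sum_distrib_left)

declare GammaI.simps[simp del]

lemma GammaI_2_eq:
  "GammaI V E 2 f f x = laplacian V E (GammaI V E 1 f f) x / 2 - GammaI V E 1 f (laplacian V E f) x"
proof -
  have "GammaI V E 1 (laplacian V E f) f x = GammaI V E 1 f (laplacian V E f) x"
    unfolding GammaI_1_eq by (simp add: mult.commute)
  moreover have "GammaI V E 2 f f x = (laplacian V E (GammaI V E 1 f f) x
      - GammaI V E 1 f (laplacian V E f) x - GammaI V E 1 (laplacian V E f) f x) / 2"
    by (simp only: Suc_1[symmetric] GammaI.simps(2))
  ultimately show ?thesis
    by (simp add: field_simps)
qed

lemma GammaI_1_cmult: "GammaI V E 1 (\<lambda>x. c * f x) (\<lambda>x. c * g x) x = c^2 * GammaI V E 1 f g x"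
  unfolding GammaI_1_eq by (simp add: sum_distrib_left power2_eq_square algebra_simps)

lemma GammaI_2_cmult: "GammaI V E 2 (\<lambda>x. c * f x) (\<lambda>x. c * f x) x = c^2 * GammaI V E 2 f f x"
proof -
  have "GammaI V E 1 (\<lambda>x. c * f x) (\<lambda>x. c * f x) = (\<lambda>x. c^2 * GammaI V E 1 f f x)"
    by (rule ext) (rule GammaI_1_cmult)
  then show ?thesis
    unfolding GammaI_2_eq laplacian_cmult[abs_def] GammaI_1_cmult by (simp add: algebra_simps)
qed

lemma GammaI_2_ge_curvature:
  assumes "ereal K \<le> BE_curv V E x" and pos: "GammaI V E 1 u u x > 0"
  shows "K * GammaI V E 1 u u x \<le> GammaI V E 2 u u x"
proof -
  define s where "s = 1 / sqrt (GammaI V E 1 u u x)"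
  have s2: "s^2 * GammaI V E 1 u u x = 1"
    using pos by (simp add: s_def power_divide)
  then have "GammaI V E 1 (\<lambda>y. s * u y) (\<lambda>y. s * u y) x = 1"
    by (simp only: GammaI_1_cmult)
  then have "BE_curv V E x \<le> ereal (GammaI V E 2 (\<lambda>y. s * u y) (\<lambda>y. s * u y) x)"
    unfolding BE_curv_def by (intro Inf_lower) blast
  with assms(1) have "ereal K \<le> ereal (GammaI V E 2 (\<lambda>y. s * u y) (\<lambda>y. s * u y) x)"
    by (rule order_trans)
  then have "K \<le> s^2 * GammaI V E 2 u u x"
    by (simp add: GammaI_2_cmult)
  then have "K * GammaI V E 1 u u x \<le> s^2 * GammaI V E 1 u u x * GammaI V E 2 u u x"
    using pos by (simp add: algebra_simps)
  then show ?thesis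
    using s2 by simp
qed

lemma walk_invariant:
  assumes "is_walk E p x y" "P x" "\<And>a b. P a \<Longrightarrow> E a b \<Longrightarrow> P b"
  shows "P y"
proof -
  have "P (p ! i)" if "i < length p" for i
    using that
  proof (induction i)
    case 0
    then show ?case using assms(1,2) by (simp add: is_walk_def hd_conv_nth)
  next
    case (Suc i)
    then show ?case using assms(1,3) by (auto simp: is_walk_def)
  qed
  then have "P (p ! (length p - 1))"
    using assms(1) by (simp add: is_walk_def)
  then show ?thesis
    using assms(1) by (metis is_walk_def last_conv_nth)
qed

lemma is_walk_snoc: "is_walk E p x y \<Longrightarrow> E y z \<Longrightarrow> is_walk E (p @ [z]) x z"
  unfolding is_walk_def
  by (auto simp: nth_append less_Suc_eq last_conv_nth dest: sym[of _ "length p"])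

lemma gdist_shortest_walk:
  assumes "connected_graph V E" "x \<in> V" "y \<in> V"
  shows "\<exists>p. is_walk E p x y \<and> length p = Suc (gdist E x y)"
proof -
  obtain p where "is_walk E p x y"
    using assms by (auto simp: connected_graph_def)
  then have "\<exists>n p. is_walk E p x y \<and> length p = Suc n"
    by (metis is_walk_def length_greater_0_conv Suc_pred)
  then show ?thesis
    unfolding gdist_def by (rule LeastI_ex)
qed

lemma gdist_self: "gdist E x x = 0"
proof -
  have "is_walk E [x] x x"
    by (simp add: is_walk_def)
  then show ?thesis
    unfolding gdist_def by (intro Least_eq_0) auto
qed

lemma gdist_edge_le:
  assumes "connected_graph V E" "x \<in> V" "y \<in> V" "E y z"
  shows "gdist E x z \<le> gdist E x y + 1"
proof -
  obtain p where p: "is_walk E p x y" "length p = Suc (gdist E x y)"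
    using gdist_shortest_walk[OF assms(1-3)] by blast
  then have "is_walk E (p @ [z]) x z \<and> length (p @ [z]) = Suc (gdist E x y + 1)"
    using assms(4) is_walk_snoc by fastforce
  then show ?thesis
    unfolding gdist_def by (intro Least_le) blast
qed

lemma gdist_edge_abs_le:
  assumes "simple_graph V E" "connected_graph V E" "x \<in> V" "E y z"
  shows "\<bar>real (gdist E x z) - real (gdist E x y)\<bar> \<le> 1"
  using gdist_edge_le[OF assms(2,3) _ assms(4)] gdist_edge_le[OF assms(2,3) _ simple_graph_sym[OF assms(1,4)]]
    simple_graph_edge_in[OF assms(1,4)] by force

lemma laplacian_eq_sum_filter:
  "simple_graph V E \<Longrightarrow> laplacian V E u x = (\<Sum>y\<in>V. if E x y then u y - u x else 0)"
  unfolding laplacian_def nbrs_def by (rule sum.inter_filter[OF simple_graph_finite])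

lemma sum_laplacian_eq_0:
  assumes "simple_graph V E"
  shows "(\<Sum>x\<in>V. laplacian V E u x) = 0"
proof -
  have lap_split: "laplacian V E u x
      = (\<Sum>y\<in>V. if E x y then u y else 0) - (\<Sum>y\<in>V. if E x y then u x else 0)" for x
    unfolding laplacian_eq_sum_filter[OF assms] sum_subtractf[symmetric] by (rule sum.cong) auto
  have "(\<Sum>x\<in>V. \<Sum>y\<in>V. if E x y then u y else 0) = (\<Sum>y\<in>V. \<Sum>x\<in>V. if E x y then u y else 0)"
    by (rule sum.swap)
  also have "\<dots> = (\<Sum>x\<in>V. \<Sum>y\<in>V. if E x y then u x else 0)"
    using simple_graph_sym[OF assms] by (intro sum.cong refl) metis
  finally show ?thesis
    by (simp add: lap_split sum_subtractf)
qed

lemma finite_attains_max: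
  fixes f :: "'a \<Rightarrow> 'b::linorder"
  assumes "finite A" "A \<noteq> {}"
  obtains z where "z \<in> A" "\<forall>w\<in>A. f w \<le> f z"
proof -
  have "Max (f ` A) \<in> f ` A"
    using assms by simp
  then obtain z where "z \<in> A" "f z = Max (f ` A)"
    by (metis imageE)
  then show thesis
    using assms that by simp
qed

lemma harmonic_imp_constant:
  assumes sg: "simple_graph V E" and cg: "connected_graph V E"
    and harmonic: "\<forall>x\<in>V. laplacian V E u x = 0" and "x \<in> V" "y \<in> V"
  shows "u x = u y"
proof -
  obtain z where z: "z \<in> V" and z_max: "\<forall>w\<in>V. u w \<le> u z"
    using finite_attains_max[OF simple_graph_finite[OF sg], of u] \<open>x \<in> V\<close> by blast
  have max_edge: "b \<in> V \<and> u b = u z" if "a \<in> V \<and> u a = u z" "E a b" for a b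
  proof -
    have "(\<Sum>w\<in>nbrs V E a. u a - u w) = - laplacian V E u a"
      by (simp add: laplacian_def sum_negf[symmetric])
    also have "\<dots> = 0"
      using harmonic that(1) by simp
    finally have sum_zero: "(\<Sum>w\<in>nbrs V E a. u a - u w) = 0" .
    have nonneg: "u a - u w \<ge> 0" if "w \<in> nbrs V E a" for w
      using z_max that \<open>a \<in> V \<and> u a = u z\<close> by (simp add: nbrs_def)
    have "\<forall>w\<in>nbrs V E a. u a - u w = 0"
      using sum_nonneg_eq_0_iff[OF finite_nbrs[OF sg, of a] nonneg] sum_zero by simp
    moreover have "b \<in> nbrs V E a"
      using simple_graph_edge_in[OF sg that(2)] that(2) by (simp add: nbrs_def)
    ultimately show ?thesis
      using that(1) by (simp add: nbrs_def)
  qed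
  have "w \<in> V \<and> u w = u z" if w: "w \<in> V" for w
  proof -
    obtain p where "is_walk E p z w"
      using cg z(1) w unfolding connected_graph_def by blast
    moreover have "z \<in> V \<and> u z = u z"
      using z(1) by simp
    ultimately show ?thesis
      using max_edge by (rule walk_invariant[where P = "\<lambda>a. a \<in> V \<and> u a = u z"])
  qed
  then show ?thesis
    using assms(4,5) by simp
qed

lemma mat_mult_vec_solvable_if_inj:
  fixes A :: "'a::field mat"
  assumes A: "A \<in> carrier_mat n n"
    and inj: "\<And>v. v \<in> carrier_vec n \<Longrightarrow> A *\<^sub>v v = 0\<^sub>v n \<Longrightarrow> v = 0\<^sub>v n"
    and b: "b \<in> carrier_vec n"
  shows "\<exists>w\<in>carrier_vec n. A *\<^sub>v w = b"
proof -
  have "det A \<noteq> 0"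
    using det_0_iff_vec_prod_zero_field[OF A] inj by blast
  from det_non_zero_imp_unit[OF A this, unfolded Units_def, of "()"]
  obtain B where B: "B \<in> carrier_mat n n" "A * B = 1\<^sub>m n"
    by (auto simp: ring_mat_def)
  have "A *\<^sub>v (B *\<^sub>v b) = b"
    using A B b by (simp add: assoc_mult_mat_vec[symmetric, of _ n n _ n])
  moreover have "B *\<^sub>v b \<in> carrier_vec n"
    using B b by simp
  ultimately show ?thesis
    by blast
qed

lemma kernel_operator_inj_imp_surj:
  fixes k :: "'a \<Rightarrow> 'a \<Rightarrow> real"
  assumes "finite V"
    and inj: "\<And>u. \<forall>x\<in>V. (\<Sum>y\<in>V. k x y * u y) = 0 \<Longrightarrow> \<forall>x\<in>V. u x = 0"
  shows "\<exists>u. \<forall>x\<in>V. (\<Sum>y\<in>V. k x y * u y) = g x"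
proof -
  define n where "n = card V"
  obtain e where e: "bij_betw e {0..<n} V"
    using ex_bij_betw_nat_finite[OF assms(1)] n_def by blast
  define idx where "idx = inv_into {0..<n} e"
  have e_in: "e i \<in> V" and idx_e: "idx (e i) = i" if "i < n" for i
    using e that by (auto simp: idx_def bij_betw_inv_into_left bij_betw_apply)
  have e_idx: "e (idx y) = y" and idx_less: "idx y < n" if "y \<in> V" for y
    using bij_betw_inv_into_right[OF e that] bij_betw_apply[OF bij_betw_inv_into[OF e] that]
    by (auto simp: idx_def)
  define A :: "real mat" where "A = mat n n (\<lambda>(i, j). k (e i) (e j))"
  have A: "A \<in> carrier_mat n n"
    by (simp add: A_def)
  have A_mult: "vec_index (A *\<^sub>v w) (idx x) = (\<Sum>y\<in>V. k x y * vec_index w (idx y))"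
    if "w \<in> carrier_vec n" "x \<in> V" for w x
  proof -
    have "vec_index (A *\<^sub>v w) (idx x) = (\<Sum>j\<in>{0..<n}. k (e (idx x)) (e j) * vec_index w j)"
      using that(1) idx_less[OF that(2)] by (simp add: A_def scalar_prod_def)
    also have "\<dots> = (\<Sum>j\<in>{0..<n}. k x (e j) * vec_index w (idx (e j)))"
      using e_idx[OF that(2)] idx_e by (intro sum.cong) auto
    also have "\<dots> = (\<Sum>y\<in>V. k x y * vec_index w (idx y))"
      by (rule sum.reindex_bij_betw[OF e])
    finally show ?thesis .
  qed
  have "\<exists>w\<in>carrier_vec n. A *\<^sub>v w = vec n (\<lambda>i. g (e i))"
  proof (rule mat_mult_vec_solvable_if_inj[OF A])
    fix v :: "real vec"
    assume v: "v \<in> carrier_vec n" "A *\<^sub>v v = 0\<^sub>v n"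
    then have "\<forall>x\<in>V. (\<Sum>y\<in>V. k x y * vec_index v (idx y)) = 0"
      using A_mult[OF v(1)] idx_less by simp
    then have v_idx: "\<forall>x\<in>V. vec_index v (idx x) = 0"
      by (rule inj)
    show "v = 0\<^sub>v n"
    proof (rule eq_vecI)
      show "dim_vec v = dim_vec (0\<^sub>v n)"
        using v(1) by simp
      fix i
      assume "i < dim_vec (0\<^sub>v n)"
      then show "vec_index v i = vec_index (0\<^sub>v n) i"
        using v_idx e_in idx_e by (metis index_zero_vec(1,2))
    qed
  qed simp
  then obtain w where w: "w \<in> carrier_vec n" "A *\<^sub>v w = vec n (\<lambda>i. g (e i))" ..
  then have "\<forall>x\<in>V. (\<Sum>y\<in>V. k x y * vec_index w (idx y)) = g x"
    using A_mult[OF w(1)] idx_less e_idx by simp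
  then show ?thesis
    by (intro exI[of _ "\<lambda>y. vec_index w (idx y)"])
qed

definition laplacian_matrix :: "'a set \<Rightarrow> ('a \<Rightarrow> 'a \<Rightarrow> bool) \<Rightarrow> 'a \<Rightarrow> 'a \<Rightarrow> real" where
  "laplacian_matrix V E x y = (if E x y then 1 else 0) - (if y = x then real (deg V E x) else 0)"

lemma laplacian_eq_matrix_sum:
  assumes "simple_graph V E" "x \<in> V"
  shows "laplacian V E u x = (\<Sum>y\<in>V. laplacian_matrix V E x y * u y)"
proof -
  have "(\<Sum>y\<in>V. laplacian_matrix V E x y * u y)
      = (\<Sum>y\<in>V. if E x y then u y else 0) - (\<Sum>y\<in>V. if y = x then real (deg V E x) * u y else 0)"
    unfolding laplacian_matrix_def sum_subtractf[symmetric] by (rule sum.cong) (auto simp: algebra_simps)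
  also have "(\<Sum>y\<in>V. if E x y then u y else 0) = (\<Sum>y\<in>nbrs V E x. u y)"
    unfolding nbrs_def by (rule sum.inter_filter[OF simple_graph_finite[OF assms(1)], symmetric])
  also have "(\<Sum>y\<in>V. if y = x then real (deg V E x) * u y else 0) = real (deg V E x) * u x"
    using assms(2) simple_graph_finite[OF assms(1)] by simp
  finally show ?thesis
    by (simp add: laplacian_eq)
qed

lemma exists_laplacian_eq:
  assumes sg: "simple_graph V E" and cg: "connected_graph V E" and "(\<Sum>x\<in>V. g x) = 0"
  shows "\<exists>u. \<forall>x\<in>V. laplacian V E u x = g x"
proof -
  define k where "k x y = laplacian_matrix V E x y - 1" for x y
  have k_sum: "(\<Sum>y\<in>V. k x y * u y) = laplacian V E u x - (\<Sum>y\<in>V. u y)" if "x \<in> V" for x u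
    using laplacian_eq_matrix_sum[OF sg that]
    by (simp add: k_def left_diff_distrib sum_subtractf)
  have sum_k_sum: "(\<Sum>x\<in>V. \<Sum>y\<in>V. k x y * u y) = - real (card V) * (\<Sum>y\<in>V. u y)" for u
    using sum_laplacian_eq_0[OF sg, of u] by (simp add: k_sum sum_subtractf)
  have card_pos: "real (card V) > 0"
    using connected_graph_card_pos[OF sg cg] by simp
  \<comment> \<open>Shifting the Laplacian by \<open>- \<Sum>u\<close> removes its kernel (the constants): summing over \<open>V\<close>
     turns \<open>\<Delta>u - \<Sum>u = g\<close> into \<open>- |V| \<Sum>u = \<Sum>g\<close>, so \<open>\<Sum>u = 0\<close> whenever \<open>\<Sum>g = 0\<close>.\<close>
  have "\<exists>u. \<forall>x\<in>V. (\<Sum>y\<in>V. k x y * u y) = g x"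
  proof (rule kernel_operator_inj_imp_surj)
    show "finite V"
      using simple_graph_finite[OF sg] .
  next
    fix u :: "'a \<Rightarrow> real"
    assume zero: "\<forall>x\<in>V. (\<Sum>y\<in>V. k x y * u y) = 0"
    then have sum_zero: "(\<Sum>y\<in>V. u y) = 0"
      using sum_k_sum[of u] card_pos by simp
    with zero have "\<forall>x\<in>V. laplacian V E u x = 0"
      by (simp add: k_sum)
    then have const: "u y = u x" if "x \<in> V" "y \<in> V" for x y
      by (rule harmonic_imp_constant[OF sg cg _ that(2,1)])
    show "\<forall>x\<in>V. u x = 0"
    proof
      fix x
      assume "x \<in> V"
      have "(\<Sum>y\<in>V. u y) = (\<Sum>y\<in>V. u x)"
        by (rule sum.cong[OF refl const[OF \<open>x \<in> V\<close>]])
      with sum_zero card_pos show "u x = 0"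
        by simp
    qed
  qed
  then obtain u where u: "\<forall>x\<in>V. (\<Sum>y\<in>V. k x y * u y) = g x" ..
  then have "(\<Sum>y\<in>V. u y) = 0"
    using sum_k_sum[of u] card_pos assms(3) by simp
  with u show ?thesis
    by (auto simp: k_sum)
qed

lemma GammaI_1_self_eq: "GammaI V E 1 u u x = (\<Sum>y\<in>nbrs V E x. (u y - u x)^2) / 2"
  unfolding GammaI_1_eq by (simp add: power2_eq_square)

lemma GammaI_1_self_nonneg: "GammaI V E 1 u u x \<ge> 0"
  unfolding GammaI_1_self_eq by (simp add: sum_nonneg)

lemma laplacian_square_le: "(laplacian V E u x)^2 \<le> 2 * real (deg V E x) * GammaI V E 1 u u x"
proof -
  have "(laplacian V E u x)^2 = (\<Sum>y\<in>nbrs V E x. 1 * (u y - u x))^2"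
    by (simp add: laplacian_def)
  also have "\<dots> \<le> (\<Sum>y\<in>nbrs V E x. 1^2) * (\<Sum>y\<in>nbrs V E x. (u y - u x)^2)"
    by (rule Cauchy_Schwarz_ineq_sum)
  also have "\<dots> = 2 * real (deg V E x) * GammaI V E 1 u u x"
    unfolding GammaI_1_self_eq deg_def by simp
  finally show ?thesis .
qed

lemma GammaI_1_bound_at_max:
  assumes "K > 0" and curv: "ereal K \<le> BE_curv V E x"
    and max: "\<forall>y\<in>nbrs V E x. GammaI V E 1 u u y \<le> GammaI V E 1 u u x"
    and lap: "\<forall>y\<in>insert x (nbrs V E x). laplacian V E u y = f y - c"
    and lip: "\<forall>y\<in>nbrs V E x. \<bar>f y - f x\<bar> \<le> 1"
  shows "K^2 * GammaI V E 1 u u x \<le> real (deg V E x) / 2"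
proof (cases "GammaI V E 1 u u x = 0")
  case True
  then show ?thesis
    by simp
next
  case False
  define G where "G = GammaI V E 1 u u x"
  define P where "P = (\<Sum>y\<in>nbrs V E x. (u y - u x) * (f y - f x))"
  have G_pos: "G > 0"
    using False GammaI_1_self_nonneg[of V E u x] by (simp add: G_def)
  have lap_GammaI_nonpos: "laplacian V E (GammaI V E 1 u u) x \<le> 0"
    unfolding laplacian_def using max by (simp add: sum_nonpos)
  have GammaI_lap_eq: "GammaI V E 1 u (laplacian V E u) x = P / 2"
    unfolding GammaI_1_eq P_def using lap by (simp add: sum_divide_distrib)
  from lap_GammaI_nonpos GammaI_lap_eq have "K * G \<le> - P / 2"
    using GammaI_2_ge_curvature[OF curv, of u] G_pos unfolding G_def GammaI_2_eq by linarith
  then have "(K * G)^2 \<le> (- P / 2)^2"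
    using \<open>K > 0\<close> G_pos by (intro power_mono) auto
  then have KG: "4 * (K * G)^2 \<le> P^2"
    by (simp add: power_divide)
  have "(\<Sum>y\<in>nbrs V E x. (f y - f x)^2) \<le> (\<Sum>y\<in>nbrs V E x. 1)"
    using lip by (intro sum_mono) (simp add: abs_square_le_1)
  then have f_bound: "(\<Sum>y\<in>nbrs V E x. (f y - f x)^2) \<le> real (deg V E x)"
    by (simp add: deg_def)
  have "P^2 \<le> (\<Sum>y\<in>nbrs V E x. (u y - u x)^2) * (\<Sum>y\<in>nbrs V E x. (f y - f x)^2)"
    unfolding P_def by (rule Cauchy_Schwarz_ineq_sum)
  also have "\<dots> = 2 * G * (\<Sum>y\<in>nbrs V E x. (f y - f x)^2)"
    unfolding G_def GammaI_1_self_eq by simp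
  also have "\<dots> \<le> 2 * G * real (deg V E x)"
    using f_bound G_pos by (intro mult_left_mono) auto
  finally have "(K^2 * G) * (4 * G) \<le> (real (deg V E x) / 2) * (4 * G)"
    using KG by (simp add: power2_eq_square algebra_simps)
  then show ?thesis
    using G_pos by (simp add: G_def)
qed

lemma GammaI_1_bound_gdist_potential:
  assumes sg: "simple_graph V E" and cg: "connected_graph V E" and "K > 0"
    and curv: "\<forall>x\<in>V. ereal K \<le> BE_curv V E x" and "a \<in> V"
    and u: "\<forall>x\<in>V. laplacian V E u x = real (gdist E a x) - m" and "x \<in> V"
  shows "K^2 * GammaI V E 1 u u x \<le> real (Max (deg V E ` V)) / 2"
proof -
  have fin: "finite V"
    using simple_graph_finite[OF sg] .
  obtain x0 where x0: "x0 \<in> V" "\<forall>y\<in>V. GammaI V E 1 u u y \<le> GammaI V E 1 u u x0"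
    using finite_attains_max[OF fin, of "GammaI V E 1 u u"] \<open>x \<in> V\<close> by blast
  have nbrs_sub: "nbrs V E x0 \<subseteq> V"
    by (auto simp: nbrs_def)
  have "K^2 * GammaI V E 1 u u x \<le> K^2 * GammaI V E 1 u u x0"
    using x0(2) \<open>x \<in> V\<close> by (simp add: mult_left_mono)
  also have "\<dots> \<le> real (deg V E x0) / 2"
  proof (rule GammaI_1_bound_at_max[OF \<open>K > 0\<close> curv[rule_format, OF x0(1)]])
    show "\<forall>y\<in>nbrs V E x0. GammaI V E 1 u u y \<le> GammaI V E 1 u u x0"
      using x0(2) nbrs_sub by blast
    show "\<forall>y\<in>insert x0 (nbrs V E x0). laplacian V E u y = real (gdist E a y) - m"
      using u x0(1) nbrs_sub by auto
    show "\<forall>y\<in>nbrs V E x0. \<bar>real (gdist E a y) - real (gdist E a x0)\<bar> \<le> 1"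
      using gdist_edge_abs_le[OF sg cg \<open>a \<in> V\<close>] by (simp add: nbrs_def)
  qed
  also have "\<dots> \<le> real (Max (deg V E ` V)) / 2"
    using fin x0(1) by simp
  finally show ?thesis .
qed

lemma sum_gdist_le:
  assumes sg: "simple_graph V E" and cg: "connected_graph V E" and "K > 0"
    and curv: "\<forall>x\<in>V. ereal K \<le> BE_curv V E x" and "a \<in> V"
  shows "(\<Sum>y\<in>V. real (gdist E a y)) \<le> real (card V) * real (Max (deg V E ` V)) / K"
proof -
  define D where "D = real (Max (deg V E ` V))"
  define m where "m = (\<Sum>y\<in>V. real (gdist E a y)) / real (card V)"
  have card_pos: "real (card V) > 0"
    using connected_graph_card_pos[OF sg cg] by simp
  have "(\<Sum>x\<in>V. real (gdist E a x) - m) = 0"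
    using card_pos by (simp add: sum_subtractf m_def)
  then obtain u where u: "\<forall>x\<in>V. laplacian V E u x = real (gdist E a x) - m"
    using exists_laplacian_eq[OF sg cg] by blast
  have grad: "K^2 * GammaI V E 1 u u a \<le> D / 2"
    unfolding D_def by (rule GammaI_1_bound_gdist_potential[OF assms u \<open>a \<in> V\<close>])
  have deg_le: "real (deg V E a) \<le> D"
    using simple_graph_finite[OF sg] \<open>a \<in> V\<close> by (simp add: D_def)
  \<comment> \<open>The potential vanishes at \<open>a\<close>, so the mean \<open>m\<close> is read off the Laplacian of \<open>u\<close> at \<open>a\<close>.\<close>
  have "(K * m)^2 = K^2 * (laplacian V E u a)^2"
    using u \<open>a \<in> V\<close> by (simp add: gdist_self power_mult_distrib)
  also have "\<dots> \<le> K^2 * (2 * real (deg V E a) * GammaI V E 1 u u a)"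
    by (intro mult_left_mono laplacian_square_le) simp
  also have "\<dots> = 2 * real (deg V E a) * (K^2 * GammaI V E 1 u u a)"
    by (simp add: ac_simps)
  also have "\<dots> \<le> 2 * D * (D / 2)"
    using deg_le grad GammaI_1_self_nonneg[of V E u a] by (intro mult_mono) (auto simp: D_def)
  also have "\<dots> = D^2"
    by (simp add: power2_eq_square)
  finally have "K * m \<le> D"
    by (rule power2_le_imp_le) (simp add: D_def)
  then show ?thesis
    using card_pos \<open>K > 0\<close> by (simp add: m_def D_def field_simps)
qed

theorem theoremA1:
  fixes V :: "'a set" and E :: "'a \<Rightarrow> 'a \<Rightarrow> bool" and K :: real
  assumes "simple_graph V E"
    and "connected_graph V E"
    and "K > 0"
    and "\<forall>x\<in>V. ereal K \<le> BE_curv V E x"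
  shows "eff_diam V E \<le> real (Max (deg V E ` V)) / K"
proof -
  define n where "n = real (card V)"
  define D where "D = real (Max (deg V E ` V))"
  have "n > 0"
    using connected_graph_card_pos[OF assms(1,2)] by (simp add: n_def)
  have "(\<Sum>x\<in>V. \<Sum>y\<in>V. real (gdist E x y)) \<le> (\<Sum>x\<in>V. n * D / K)"
    using sum_gdist_le[OF assms] by (intro sum_mono) (simp add: n_def D_def)
  then have "eff_diam V E \<le> n * (n * D / K) / n^2"
    unfolding eff_diam_def n_def by (intro divide_right_mono) auto
  also have "\<dots> = D / K"
    using \<open>n > 0\<close> by (simp add: power2_eq_square)
  finally show ?thesis
    by (simp add: D_def)
qed

end
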